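(* Let $(\omega_t)_{t\ge1}$ be any sequence of $(0,1)$-valued random variables with each $\omega_t$ $\mathcal{F}_{t-1}$-measurable, and define the e-LORD testing levels recursively by $\alpha_1=\alpha\omega_1$ and, for $t\ge2$, $$\alpha_t=\omega_t\Big(\alpha-\sum_{j=1}^{t-1}\frac{\alpha_j}{R_{j-1}+1}\Big)(R_{t-1}+1).$$ Then for all $t\ge1$, $\alpha_t=\alpha\,(R_{t-1}+1)\,\omega_t\prod_{j=1}^{t-1}(1-\omega_j)$, each $\alpha_t$ is positive and $\mathcal{F}_{t-1}$-measurable, and $\sum_{j=1}^t\frac{\alpha_j}{R_{j-1}+1}=\alpha\big(1-\prod_{j=1}^t(1-\omega_j)\big)\le\alpha$. Consequently, if the e-values are valid ($\mathbb{E}[e_t\mid\mathcal{F}_{t-1}]\le1$ a.s. whenever $\theta_t=0$), then $\mathrm{FDR}(t)\le\alpha$ for all $t\ge1$.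
   Context: Let $\alpha\in(0,1)$ be a target level. Hypotheses are indexed by $t=1,2,\dots$; $\theta_t\in\{0,1\}$ is a fixed (non-random) indicator with $\theta_t=0$ iff the $t$-th null hypothesis is true. $e_1,e_2,\dots$ are nonnegative random variables (e-values). The decisions are $\delta_t=\mathbb{1}\{e_t\ge 1/\alpha_t\}$. Let $\mathcal{F}_t=\sigma(\delta_1,\dots,\delta_t)$, $\mathcal{F}_0$ trivial. $R_t=\sum_{j=1}^t\delta_j$, $R_0=0$. $\mathcal{H}_0(t)=\{j\le t:\theta_j=0\}$. $\mathrm{FDR}(t)=\mathbb{E}\big[\sum_{j\in\mathcal{H}_0(t)}\delta_j/(R_t\vee 1)\big]$. *)

theory Defs
  imports "HOL-Probability.Probability"
begin

definition dec :: "(nat \<Rightarrow> 'a \<Rightarrow> real) \<Rightarrow> (nat \<Rightarrow> 'a \<Rightarrow> real) \<Rightarrow> nat \<Rightarrow> 'a \<Rightarrow> real" where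
  "dec al e t x = (if e t x \<ge> 1 / al t x then 1 else 0)"

definition rej :: "(nat \<Rightarrow> 'a \<Rightarrow> real) \<Rightarrow> (nat \<Rightarrow> 'a \<Rightarrow> real) \<Rightarrow> nat \<Rightarrow> 'a \<Rightarrow> real" where
  "rej al e t x = (\<Sum>j\<in>{1..t}. dec al e j x)"

definition filt :: "'a measure \<Rightarrow> (nat \<Rightarrow> 'a \<Rightarrow> real) \<Rightarrow> (nat \<Rightarrow> 'a \<Rightarrow> real) \<Rightarrow> nat \<Rightarrow> 'a measure" where
  "filt M al e t = sigma (space M)
     (\<Union>j\<in>{1..t}. {dec al e j -` B \<inter> space M | B. B \<in> sets borel})"

definition FDR :: "'a measure \<Rightarrow> (nat \<Rightarrow> nat) \<Rightarrow> (nat \<Rightarrow> 'a \<Rightarrow> real) \<Rightarrow> (nat \<Rightarrow> 'a \<Rightarrow> real) \<Rightarrow> nat \<Rightarrow> real" where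
  "FDR M \<theta> al e t = (LINT x|M. (\<Sum>j\<in>{j\<in>{1..t}. \<theta> j = 0}. dec al e j x) / max (rej al e t x) 1)"

end

theory Submission
  imports Defs
begin

text \<open>
  Write S t for the sum of \<alpha>_j / (R_(j-1) + 1) over 1 \<le> j \<le> t. The recursion says that the
  t-th level spends the fraction \<omega>_t of the unspent budget \<alpha> - S (t-1), hence
  \<alpha> - S t = \<alpha> * \<Prod>_(j\<le>t) (1 - \<omega>_j); this gives the closed form, positivity and S t \<le> \<alpha>,
  and the closed form shows that \<alpha>_t is predictable. For the FDR: a rejection at time j \<le> t
  means \<alpha>_j e_j \<ge> 1 and R_t \<ge> R_(j-1) + 1, so \<delta>_j / (R_t \<or> 1) \<le> \<alpha>_j / (R_(j-1) + 1) * e_j.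
  The weight \<alpha>_j / (R_(j-1) + 1) is F_(j-1)-measurable and E[e_j | F_(j-1)] \<le> 1 for true nulls,
  so the expectation of the right-hand side, summed over the nulls, is at most E[S t] \<le> \<alpha>.
\<close>

lemma elord_spent_eq:
  fixes a r w :: "nat \<Rightarrow> real" and \<alpha> :: real
  assumes rec: "\<And>t. t \<ge> 1 \<Longrightarrow> a t = w t * (\<alpha> - (\<Sum>j\<in>{1..t-1}. a j / r j)) * r t"
    and r_pos: "\<And>t. t \<ge> 1 \<Longrightarrow> 0 < r t"
  shows "(\<Sum>j\<in>{1..t}. a j / r j) = \<alpha> * (1 - (\<Prod>j\<in>{1..t}. 1 - w j))"
proof (induction t)
  case 0
  show ?case by simp
next
  case (Suc n)
  have "a (Suc n) / r (Suc n) = w (Suc n) * (\<alpha> - (\<Sum>j\<in>{1..n}. a j / r j))"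
    using rec[of "Suc n"] r_pos[of "Suc n"] by simp
  also have "\<dots> = \<alpha> * w (Suc n) * (\<Prod>j\<in>{1..n}. 1 - w j)"
    unfolding Suc.IH by (simp add: algebra_simps)
  finally have increment: "a (Suc n) / r (Suc n) = \<alpha> * w (Suc n) * (\<Prod>j\<in>{1..n}. 1 - w j)" .
  have "(\<Sum>j\<in>{1..Suc n}. a j / r j) = (\<Sum>j\<in>{1..n}. a j / r j) + a (Suc n) / r (Suc n)"
    by simp
  also have "\<dots> = \<alpha> * (1 - (\<Prod>j\<in>{1..n}. 1 - w j)) + \<alpha> * w (Suc n) * (\<Prod>j\<in>{1..n}. 1 - w j)"
    unfolding Suc.IH increment ..
  also have "\<dots> = \<alpha> * (1 - (\<Prod>j\<in>{1..Suc n}. 1 - w j))"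
    by (simp add: algebra_simps)
  finally show ?case .
qed

lemma elord_level_closed_form:
  fixes a r w :: "nat \<Rightarrow> real" and \<alpha> :: real
  assumes rec: "\<And>t. t \<ge> 1 \<Longrightarrow> a t = w t * (\<alpha> - (\<Sum>j\<in>{1..t-1}. a j / r j)) * r t"
    and r_pos: "\<And>t. t \<ge> 1 \<Longrightarrow> 0 < r t"
    and "t \<ge> 1"
  shows "a t = \<alpha> * r t * w t * (\<Prod>j\<in>{1..t-1}. 1 - w j)"
proof -
  have "(\<Sum>j\<in>{1..t-1}. a j / r j) = \<alpha> * (1 - (\<Prod>j\<in>{1..t-1}. 1 - w j))"
    using rec r_pos by (rule elord_spent_eq)
  then show ?thesis
    unfolding rec[OF \<open>t \<ge> 1\<close>] by (simp only:) (simp add: algebra_simps)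
qed

lemma elord_level_pos:
  fixes a r w :: "nat \<Rightarrow> real" and \<alpha> :: real
  assumes rec: "\<And>t. t \<ge> 1 \<Longrightarrow> a t = w t * (\<alpha> - (\<Sum>j\<in>{1..t-1}. a j / r j)) * r t"
    and r_pos: "\<And>t. t \<ge> 1 \<Longrightarrow> 0 < r t"
    and w_range: "\<And>t. t \<ge> 1 \<Longrightarrow> 0 < w t \<and> w t < 1"
    and "0 < \<alpha>" "t \<ge> 1"
  shows "0 < a t"
proof -
  have "0 < (\<Prod>j\<in>{1..t-1}. 1 - w j)"
    using w_range by (intro prod_pos) auto
  then show ?thesis
    using elord_level_closed_form[OF rec r_pos \<open>t \<ge> 1\<close>] r_pos[OF \<open>t \<ge> 1\<close>]
      w_range[OF \<open>t \<ge> 1\<close>] \<open>0 < \<alpha>\<close> by simp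
qed

lemma dec_nonneg: "0 \<le> dec al e j x"
  by (simp add: dec_def)

lemma rej_0 [simp]: "rej al e 0 x = 0"
  by (simp add: rej_def)

lemma rej_Suc: "rej al e (Suc n) x = rej al e n x + dec al e (Suc n) x"
  by (simp add: rej_def)

lemma rej_nonneg: "0 \<le> rej al e n x"
  unfolding rej_def by (intro sum_nonneg dec_nonneg)

lemma rej_mono: "n \<le> m \<Longrightarrow> rej al e n x \<le> rej al e m x"
  unfolding rej_def by (intro sum_mono2) (auto simp: dec_nonneg)

lemma dec_measurable:
  assumes "al j \<in> borel_measurable M" "e j \<in> borel_measurable M"
  shows "dec al e j \<in> borel_measurable M"
proof -
  have "dec al e j = (\<lambda>x. if 1 / al j x \<le> e j x then 1 else 0)"
    by (simp add: dec_def fun_eq_iff)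
  then show ?thesis
    using assms by simp
qed

lemma dec_div_rej_le:
  assumes "1 \<le> j" "j \<le> t" "0 < al j x" "0 \<le> e j x"
  shows "dec al e j x / max (rej al e t x) 1 \<le> al j x / (rej al e (j - 1) x + 1) * e j x"
proof (cases "1 / al j x \<le> e j x")
  case True
  then have "dec al e j x = 1" and "1 \<le> al j x * e j x"
    using \<open>0 < al j x\<close> by (auto simp: dec_def divide_le_eq mult.commute)
  moreover have "rej al e (j - 1) x + dec al e j x \<le> rej al e t x"
    using rej_Suc[of al e "j - 1" x] rej_mono[of j t al e x] assms(1,2) by simp
  ultimately show ?thesis
    using rej_nonneg[of al e "j - 1" x]
    by (simp add: frac_le)
next
  case False
  then show ?thesis
    using assms rej_nonneg[of al e "j - 1" x] by (simp add: dec_def)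
qed

lemma space_filt [simp]: "space (filt M al e n) = space M"
  by (simp add: filt_def space_measure_of_conv)

lemma sets_filt:
  "sets (filt M al e n) =
     sigma_sets (space M) (\<Union>j\<in>{1..n}. {dec al e j -` B \<inter> space M | B. B \<in> sets borel})"
  unfolding filt_def by (rule sets_measure_of) auto

lemma subalgebra_filt_mono:
  assumes "n \<le> m"
  shows "subalgebra (filt M al e m) (filt M al e n)"
proof -
  have "(\<Union>j\<in>{1..n}. {dec al e j -` B \<inter> space M | B. B \<in> sets borel})
      \<subseteq> (\<Union>j\<in>{1..m}. {dec al e j -` B \<inter> space M | B. B \<in> sets borel})"
    using assms by (intro UN_mono) auto
  then show ?thesis
    unfolding subalgebra_def sets_filt by (simp add: sigma_sets_mono')
qed

lemma measurable_filt_mono: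
  "n \<le> m \<Longrightarrow> f \<in> borel_measurable (filt M al e n) \<Longrightarrow> f \<in> borel_measurable (filt M al e m)"
  by (rule measurable_from_subalg[OF subalgebra_filt_mono])

lemma dec_measurable_filt:
  assumes "1 \<le> j" "j \<le> n"
  shows "dec al e j \<in> borel_measurable (filt M al e n)"
proof (rule measurableI)
  fix B :: "real set"
  assume "B \<in> sets borel"
  then show "dec al e j -` B \<inter> space (filt M al e n) \<in> sets (filt M al e n)"
    using assms unfolding sets_filt space_filt by (intro sigma_sets.Basic UN_I[of j]) auto
qed simp

lemma rej_measurable_filt:
  assumes "n \<le> m"
  shows "rej al e n \<in> borel_measurable (filt M al e m)"
proof -
  have "rej al e n = (\<lambda>x. \<Sum>j\<in>{1..n}. dec al e j x)"
    by (simp add: rej_def fun_eq_iff)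
  then show ?thesis
    using assms by (auto intro!: borel_measurable_sum dec_measurable_filt)
qed

lemma elord_level_measurable:
  assumes \<omega>_pred: "\<And>j. 1 \<le> j \<Longrightarrow> \<omega> j \<in> borel_measurable (filt M al e (j - 1))"
    and closed_form: "\<And>x. x \<in> space M \<Longrightarrow>
      al t x = \<alpha> * (rej al e (t - 1) x + 1) * \<omega> t x * (\<Prod>j\<in>{1..t-1}. 1 - \<omega> j x)"
    and "1 \<le> t"
  shows "al t \<in> borel_measurable (filt M al e (t - 1))"
proof -
  have "\<omega> j \<in> borel_measurable (filt M al e (t - 1))" if "j \<in> {1..t}" for j
    using that \<omega>_pred[of j] by (auto intro: measurable_filt_mono[of "j - 1"])
  then have "(\<lambda>x. \<alpha> * (rej al e (t - 1) x + 1) * \<omega> t x * (\<Prod>j\<in>{1..t-1}. 1 - \<omega> j x))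
      \<in> borel_measurable (filt M al e (t - 1))"
    by (intro borel_measurable_times borel_measurable_add borel_measurable_prod
        borel_measurable_diff borel_measurable_const rej_measurable_filt) (use \<open>1 \<le> t\<close> in auto)
  then show ?thesis
    by (rule measurable_cong[THEN iffD2, rotated]) (simp add: closed_form)
qed

lemma subalgebra_filt:
  assumes "\<And>j. 1 \<le> j \<Longrightarrow> j \<le> n \<Longrightarrow> dec al e j \<in> borel_measurable M"
  shows "subalgebra M (filt M al e n)"
proof -
  have "(\<Union>j\<in>{1..n}. {dec al e j -` B \<inter> space M | B. B \<in> sets borel}) \<subseteq> sets M"
    using assms by (auto intro: measurable_sets)
  then show ?thesis
    unfolding subalgebra_def sets_filt by (simp add: sets.sigma_sets_subset)
qed

lemma subalgebra_filt_predictable: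
  assumes pred: "\<And>t. 1 \<le> t \<Longrightarrow> al t \<in> borel_measurable (filt M al e (t - 1))"
    and e_rv: "\<And>t. 1 \<le> t \<Longrightarrow> e t \<in> borel_measurable M"
  shows "subalgebra M (filt M al e n)"
proof (induction n)
  case 0
  show ?case by (rule subalgebra_filt) simp
next
  case (Suc n)
  show ?case
  proof (rule subalgebra_filt)
    fix j
    assume j: "1 \<le> j" "j \<le> Suc n"
    have "al j \<in> borel_measurable (filt M al e n)"
      using pred[OF j(1)] by (rule measurable_filt_mono[rotated]) (use j(2) in simp)
    then have "al j \<in> borel_measurable M"
      by (rule measurable_from_subalg[OF Suc.IH])
    then show "dec al e j \<in> borel_measurable M"
      using e_rv[OF j(1)] by (rule dec_measurable)
  qed
qed

lemma false_discovery_proportion_le: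
  assumes "finite D" "D \<subseteq> {1..t}"
    and al_pos: "\<And>j. j \<in> D \<Longrightarrow> 0 < al j x" and e_nonneg: "\<And>j. j \<in> D \<Longrightarrow> 0 \<le> e j x"
  shows "ennreal ((\<Sum>j\<in>D. dec al e j x) / max (rej al e t x) 1)
    \<le> (\<Sum>j\<in>D. ennreal (al j x / (rej al e (j - 1) x + 1)) * ennreal (e j x))"
proof -
  have g_nonneg: "0 \<le> al j x / (rej al e (j - 1) x + 1)" if "j \<in> D" for j
    using al_pos[OF that] rej_nonneg[of al e "j - 1" x] by simp
  have "(\<Sum>j\<in>D. dec al e j x) / max (rej al e t x) 1
      \<le> (\<Sum>j\<in>D. al j x / (rej al e (j - 1) x + 1) * e j x)"
    unfolding sum_divide_distrib using assms by (intro sum_mono dec_div_rej_le) auto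
  then have "ennreal ((\<Sum>j\<in>D. dec al e j x) / max (rej al e t x) 1)
      \<le> ennreal (\<Sum>j\<in>D. al j x / (rej al e (j - 1) x + 1) * e j x)"
    by (rule ennreal_leI)
  also have "\<dots> = (\<Sum>j\<in>D. ennreal (al j x / (rej al e (j - 1) x + 1) * e j x))"
    using g_nonneg e_nonneg by (intro sum_ennreal[symmetric] mult_nonneg_nonneg)
  also have "\<dots> = (\<Sum>j\<in>D. ennreal (al j x / (rej al e (j - 1) x + 1)) * ennreal (e j x))"
    using g_nonneg e_nonneg by (intro sum.cong refl ennreal_mult)
  finally show ?thesis .
qed

lemma nn_integral_mult_le_if_nn_cond_exp_le_1:
  fixes g e :: "'a \<Rightarrow> ennreal"
  assumes "sigma_finite_subalgebra M N"
    and "g \<in> borel_measurable N" "e \<in> borel_measurable M"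
    and "AE x in M. nn_cond_exp M N e x \<le> 1"
  shows "(\<integral>\<^sup>+x. g x * e x \<partial>M) \<le> (\<integral>\<^sup>+x. g x \<partial>M)"
proof -
  interpret sigma_finite_subalgebra M N by fact
  have "(\<integral>\<^sup>+x. g x * e x \<partial>M) = (\<integral>\<^sup>+x. g x * nn_cond_exp M N e x \<partial>M)"
    using assms(2,3) by (rule nn_cond_exp_intg[symmetric])
  also have "\<dots> \<le> (\<integral>\<^sup>+x. g x \<partial>M)"
    using assms(4) by (intro nn_integral_mono_AE) (auto elim!: eventually_mono intro: mult_left_le)
  finally show ?thesis .
qed

lemma nn_integral_predictable_mult_e_value_le:
  assumes "prob_space M"
    and pred: "\<And>j. 1 \<le> j \<Longrightarrow> al j \<in> borel_measurable (filt M al e (j - 1))"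
    and e_rv: "\<And>j. 1 \<le> j \<Longrightarrow> e j \<in> borel_measurable M"
    and valid: "AE x in M. nn_cond_exp M (filt M al e (j - 1)) (\<lambda>y. ennreal (e j y)) x \<le> 1"
    and g: "g \<in> borel_measurable (filt M al e (j - 1))"
    and "1 \<le> j"
  shows "(\<integral>\<^sup>+x. ennreal (g x) * ennreal (e j x) \<partial>M) \<le> (\<integral>\<^sup>+x. ennreal (g x) \<partial>M)"
proof (rule nn_integral_mult_le_if_nn_cond_exp_le_1)
  interpret prob_space M by fact
  have "subalgebra M (filt M al e (j - 1))"
    using pred e_rv by (rule subalgebra_filt_predictable)
  then show "sigma_finite_subalgebra M (filt M al e (j - 1))"
    by (intro finite_measure_subalgebra_is_sigma_finite)
      (simp add: finite_measure_subalgebra_def finite_measure_subalgebra_axioms_def finite_measure_axioms)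
  show "(\<lambda>x. ennreal (e j x)) \<in> borel_measurable M"
    using e_rv[OF \<open>1 \<le> j\<close>] by measurable
qed (use g valid in measurable)

lemma nn_integral_FDP_le_spent:
  assumes "prob_space M"
    and pred: "\<And>j. 1 \<le> j \<Longrightarrow> al j \<in> borel_measurable (filt M al e (j - 1))"
    and al_pos: "\<And>j x. 1 \<le> j \<Longrightarrow> x \<in> space M \<Longrightarrow> 0 < al j x"
    and e_rv: "\<And>j. 1 \<le> j \<Longrightarrow> e j \<in> borel_measurable M"
    and e_nonneg: "\<And>j x. 1 \<le> j \<Longrightarrow> x \<in> space M \<Longrightarrow> 0 \<le> e j x"
    and valid: "\<And>j. 1 \<le> j \<Longrightarrow> \<theta> j = 0 \<Longrightarrow>
      AE x in M. nn_cond_exp M (filt M al e (j - 1)) (\<lambda>y. ennreal (e j y)) x \<le> 1"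
  shows "(\<integral>\<^sup>+x. ennreal ((\<Sum>j\<in>{j\<in>{1..t}. \<theta> j = 0}. dec al e j x) / max (rej al e t x) 1) \<partial>M)
    \<le> (\<integral>\<^sup>+x. ennreal (\<Sum>j\<in>{1..t}. al j x / (rej al e (j - 1) x + 1)) \<partial>M)"
    (is "_ \<le> (\<integral>\<^sup>+x. ennreal (\<Sum>j\<in>{1..t}. ?g j x) \<partial>M)")
proof -
  define D where "D = {j\<in>{1..t}. \<theta> j = 0}"
  have D: "finite D" "D \<subseteq> {1..t}"
    by (auto simp: D_def)
  have g_filt: "?g j \<in> borel_measurable (filt M al e (j - 1))" if "1 \<le> j" for j
    using pred[OF that] rej_measurable_filt[of "j - 1" "j - 1"] by measurable
  have g_rv: "?g j \<in> borel_measurable M" if "1 \<le> j" for j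
    using g_filt[OF that] subalgebra_filt_predictable[OF pred e_rv] by (rule measurable_from_subalg[rotated])
  have g_nonneg: "0 \<le> ?g j x" if "1 \<le> j" "x \<in> space M" for j x
    using al_pos[OF that] rej_nonneg[of al e "j - 1" x] by simp
  have "(\<integral>\<^sup>+x. ennreal ((\<Sum>j\<in>D. dec al e j x) / max (rej al e t x) 1) \<partial>M)
      \<le> (\<integral>\<^sup>+x. (\<Sum>j\<in>D. ennreal (?g j x) * ennreal (e j x)) \<partial>M)"
    using D al_pos e_nonneg by (intro nn_integral_mono false_discovery_proportion_le) auto
  also have "\<dots> = (\<Sum>j\<in>D. \<integral>\<^sup>+x. ennreal (?g j x) * ennreal (e j x) \<partial>M)"
    using D g_rv e_rv by (intro nn_integral_sum) auto
  also have "\<dots> \<le> (\<Sum>j\<in>D. \<integral>\<^sup>+x. ennreal (?g j x) \<partial>M)"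
    using D g_filt valid
    by (intro sum_mono nn_integral_predictable_mult_e_value_le[OF assms(1) pred e_rv]) (auto simp: D_def)
  also have "\<dots> \<le> (\<Sum>j\<in>{1..t}. \<integral>\<^sup>+x. ennreal (?g j x) \<partial>M)"
    using D by (intro sum_mono2) auto
  also have "\<dots> = (\<integral>\<^sup>+x. (\<Sum>j\<in>{1..t}. ennreal (?g j x)) \<partial>M)"
    using g_rv by (intro nn_integral_sum[symmetric]) auto
  also have "\<dots> = (\<integral>\<^sup>+x. ennreal (\<Sum>j\<in>{1..t}. ?g j x) \<partial>M)"
    using g_nonneg by (intro nn_integral_cong sum_ennreal) auto
  finally show ?thesis
    unfolding D_def .
qed

lemma FDR_le_if_spent_le:
  assumes "prob_space M"
    and pred: "\<And>j. 1 \<le> j \<Longrightarrow> al j \<in> borel_measurable (filt M al e (j - 1))"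
    and al_pos: "\<And>j x. 1 \<le> j \<Longrightarrow> x \<in> space M \<Longrightarrow> 0 < al j x"
    and e_rv: "\<And>j. 1 \<le> j \<Longrightarrow> e j \<in> borel_measurable M"
    and e_nonneg: "\<And>j x. 1 \<le> j \<Longrightarrow> x \<in> space M \<Longrightarrow> 0 \<le> e j x"
    and valid: "\<And>j. 1 \<le> j \<Longrightarrow> \<theta> j = 0 \<Longrightarrow>
      AE x in M. nn_cond_exp M (filt M al e (j - 1)) (\<lambda>y. ennreal (e j y)) x \<le> 1"
    and spent_le: "\<And>x. x \<in> space M \<Longrightarrow> (\<Sum>j\<in>{1..t}. al j x / (rej al e (j - 1) x + 1)) \<le> \<alpha>"
  shows "FDR M \<theta> al e t \<le> \<alpha>"
proof -
  interpret prob_space M by fact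
  define fdp where "fdp x = (\<Sum>j\<in>{j\<in>{1..t}. \<theta> j = 0}. dec al e j x) / max (rej al e t x) 1" for x
  have "fdp \<in> borel_measurable (filt M al e t)"
    unfolding fdp_def
    by (intro borel_measurable_divide borel_measurable_max borel_measurable_sum borel_measurable_const
        dec_measurable_filt rej_measurable_filt) auto
  then have fdp_rv: "fdp \<in> borel_measurable M"
    using subalgebra_filt_predictable[OF pred e_rv] by (rule measurable_from_subalg[rotated])
  have fdp_nonneg: "0 \<le> fdp x" for x
    unfolding fdp_def by (intro divide_nonneg_nonneg sum_nonneg dec_nonneg) simp
  have "(\<integral>\<^sup>+x. fdp x \<partial>M) \<le> (\<integral>\<^sup>+x. ennreal (\<Sum>j\<in>{1..t}. al j x / (rej al e (j - 1) x + 1)) \<partial>M)"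
    unfolding fdp_def using assms(1-6) by (rule nn_integral_FDP_le_spent)
  also have "\<dots> \<le> (\<integral>\<^sup>+x. ennreal \<alpha> \<partial>M)"
    using spent_le by (intro nn_integral_mono ennreal_leI)
  finally have "(\<integral>\<^sup>+x. fdp x \<partial>M) \<le> ennreal \<alpha>"
    by (simp add: emeasure_space_1)
  moreover have "0 \<le> \<alpha>"
  proof -
    obtain x where x: "x \<in> space M"
      using not_empty by blast
    have "0 \<le> (\<Sum>j\<in>{1..t}. al j x / (rej al e (j - 1) x + 1))"
      using al_pos[OF _ x] rej_nonneg[of al e _ x] by (intro sum_nonneg) (simp add: less_imp_le)
    with spent_le[OF x] show ?thesis
      by simp
  qed
  ultimately show ?thesis
    unfolding FDR_def fdp_def[symmetric] using fdp_rv fdp_nonneg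
    by (simp add: integral_eq_nn_integral enn2real_leI)
qed

theorem mainTheorem11:
  fixes M :: "'a measure" and \<alpha> :: real and \<theta> :: "nat \<Rightarrow> nat"
    and e \<omega> al :: "nat \<Rightarrow> 'a \<Rightarrow> real"
  assumes "prob_space M"
    and "0 < \<alpha>" "\<alpha> < 1"
    and "\<forall>t. \<theta> t \<in> {0, 1}"
    and e_rv: "\<forall>t\<ge>1. e t \<in> borel_measurable M"
    and e_nonneg: "\<forall>t\<ge>1. \<forall>x\<in>space M. 0 \<le> e t x"
    and \<omega>_rv: "\<forall>t\<ge>1. \<omega> t \<in> borel_measurable M"
    and \<omega>_range: "\<forall>t\<ge>1. \<forall>x\<in>space M. 0 < \<omega> t x \<and> \<omega> t x < 1"
    and \<omega>_pred: "\<forall>t\<ge>1. \<omega> t \<in> borel_measurable (filt M al e (t - 1))"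
    and al_1: "\<forall>x\<in>space M. al 1 x = \<alpha> * \<omega> 1 x"
    and al_t: "\<forall>t\<ge>2. \<forall>x\<in>space M. al t x =
        \<omega> t x * (\<alpha> - (\<Sum>j\<in>{1..t-1}. al j x / (rej al e (j - 1) x + 1))) * (rej al e (t - 1) x + 1)"
  shows "(\<forall>t\<ge>1. \<forall>x\<in>space M.
            al t x = \<alpha> * (rej al e (t - 1) x + 1) * \<omega> t x * (\<Prod>j\<in>{1..t-1}. (1 - \<omega> j x)))
       \<and> (\<forall>t\<ge>1. \<forall>x\<in>space M. 0 < al t x)
       \<and> (\<forall>t\<ge>1. al t \<in> borel_measurable (filt M al e (t - 1)))
       \<and> (\<forall>t\<ge>1. \<forall>x\<in>space M.
            (\<Sum>j\<in>{1..t}. al j x / (rej al e (j - 1) x + 1)) = \<alpha> * (1 - (\<Prod>j\<in>{1..t}. (1 - \<omega> j x)))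
          \<and> \<alpha> * (1 - (\<Prod>j\<in>{1..t}. (1 - \<omega> j x))) \<le> \<alpha>)
       \<and> ((\<forall>t\<ge>1. \<theta> t = 0 \<longrightarrow>
              (AE x in M. nn_cond_exp M (filt M al e (t - 1)) (\<lambda>y. ennreal (e t y)) x \<le> 1))
          \<longrightarrow> (\<forall>t\<ge>1. FDR M \<theta> al e t \<le> \<alpha>))"
proof -
  have rec: "al t x =
      \<omega> t x * (\<alpha> - (\<Sum>j\<in>{1..t-1}. al j x / (rej al e (j - 1) x + 1))) * (rej al e (t - 1) x + 1)"
    if "1 \<le> t" "x \<in> space M" for t x
    using al_1 al_t that by (cases "t = 1") (auto simp: mult.commute)
  have r_pos: "0 < rej al e (t - 1) x + 1" for t x
    using rej_nonneg[of al e "t - 1" x] by linarith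
  have closed_form: "al t x = \<alpha> * (rej al e (t - 1) x + 1) * \<omega> t x * (\<Prod>j\<in>{1..t-1}. 1 - \<omega> j x)"
    if "1 \<le> t" "x \<in> space M" for t x
    using rec[OF _ that(2)] r_pos that(1) by (rule elord_level_closed_form)
  have al_pos: "0 < al t x" if "1 \<le> t" "x \<in> space M" for t x
    using rec[OF _ that(2)] r_pos _ \<open>0 < \<alpha>\<close> that(1) by (rule elord_level_pos) (use \<omega>_range that in auto)
  have spent: "(\<Sum>j\<in>{1..t}. al j x / (rej al e (j - 1) x + 1)) = \<alpha> * (1 - (\<Prod>j\<in>{1..t}. 1 - \<omega> j x))"
    if "x \<in> space M" for t x
    using rec[OF _ that] r_pos by (rule elord_spent_eq)
  have spent_le: "\<alpha> * (1 - (\<Prod>j\<in>{1..t}. 1 - \<omega> j x)) \<le> \<alpha>" if "x \<in> space M" for t x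
  proof -
    have "0 \<le> (\<Prod>j\<in>{1..t}. 1 - \<omega> j x)"
      using \<omega>_range that by (intro prod_nonneg) (auto simp: less_imp_le)
    with \<open>0 < \<alpha>\<close> show ?thesis
      by simp
  qed
  have al_pred: "al t \<in> borel_measurable (filt M al e (t - 1))" if "1 \<le> t" for t
    using _ closed_form that by (rule elord_level_measurable) (use \<omega>_pred that in auto)
  have FDR_le: "FDR M \<theta> al e t \<le> \<alpha>"
    if "\<forall>t\<ge>1. \<theta> t = 0 \<longrightarrow>
      (AE x in M. nn_cond_exp M (filt M al e (t - 1)) (\<lambda>y. ennreal (e t y)) x \<le> 1)" for t
    using \<open>prob_space M\<close> al_pred al_pos
    by (rule FDR_le_if_spent_le) (use e_rv e_nonneg that spent spent_le in auto)
  show ?thesis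
    using closed_form al_pos al_pred spent spent_le FDR_le by blast
qed

end
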